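(* Let $\ell, m$ be positive integers and $n=(\ell+1)m$. For $1\le s\le \ell+1$ put $a_s = e_{(s-1)m+1}+\cdots+e_{sm}\in E^1$. Let $K$ be a Latin $\ell$-dimensional hypercube on $[m]$. Then in $E$ \begin{align*} \partial(a_1\wedge a_2\wedge\cdots\wedge a_{\ell+1}) &= -(a_1-a_2)\wedge \partial(a_2\wedge\cdots\wedge a_{\ell+1}) \\ &= (-1)^{\ell} m\,(a_1-a_2)\wedge(a_2-a_3)\wedge\cdots\wedge(a_\ell - a_{\ell+1}) \\ &= m\sum_{S\in\mathcal{C}[K]} \partial(e_S), \end{align*} where for $S=(i_1,\ldots,i_p)$ one writes $e_S=e_{i_1}\wedge\cdots\wedge e_{i_p}$.
   Context: $R$ is a commutative ring with $1$; $E$ is the graded exterior algebra over $R$ generated by degree-one elements $e_1,\ldots,e_n$. The $R$-linear map $\partial:E^p\to E^{p-1}$ is given by $\partial 1=0$, $\partial e_i=1$, $\partial(e_{i_1}\wedge\cdots\wedge e_{i_p})=\sum_{k=1}^p(-1)^{k-1}e_{i_1}\wedge\cdots\wedge\widehat{e_{i_k}}\wedge\cdots\wedge e_{i_p}$. A Latin $\ell$-dimensional hypercube on $[m]$ is an array $K=[k(i_1,\ldots,i_\ell)]_{1\le i_1,\ldots,i_\ell\le m}$ with entries in $[m]$ such that fixing any $\ell-1$ coordinates, the $m$ entries obtained by varying the remaining one are exactly $[m]$. $\mathcal{C}[K]$ is the family of ordered tuples $(i_1, m+i_2, 2m+i_3,\ldots,(\ell-1)m+i_\ell, \ell m+k(i_1,\ldots,i_\ell))$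 for $1\le i_1,\ldots,i_\ell\le m$. *)

theory Defs
  imports Main "HOL-Library.Function_Algebras"
begin

text \<open>Exterior algebra over a commutative ring 'r on generators e_1,...,e_n.
An element is represented by its coefficient function on the standard basis
e_I (I a finite set of indices, e_I = wedge of e_i, i in I, in increasing order).\<close>

type_synonym 'r ext = "nat set \<Rightarrow> 'r"

definition ext_one :: "'r::comm_ring_1 ext" where
  "ext_one = (\<lambda>I. if I = {} then 1 else 0)"

definition gen :: "nat \<Rightarrow> 'r::comm_ring_1 ext" where
  "gen i = (\<lambda>I. if I = {i} then 1 else 0)"

definition ext_smult :: "'r::comm_ring_1 \<Rightarrow> 'r ext \<Rightarrow> 'r ext" where
  "ext_smult c x = (\<lambda>I. c * x I)"

text \<open>Number of inversions between I and J: e_I wedge e_J = (-1)^inv I J e_(I union J)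
for disjoint I, J.\<close>
definition inv_count :: "nat set \<Rightarrow> nat set \<Rightarrow> nat" where
  "inv_count I J = card {(i, j). i \<in> I \<and> j \<in> J \<and> j < i}"

definition wedge :: "'r::comm_ring_1 ext \<Rightarrow> 'r ext \<Rightarrow> 'r ext" where
  "wedge x y = (\<lambda>K. if finite K then
      (\<Sum>I\<in>Pow K. (-1) ^ inv_count I (K - I) * x I * y (K - I)) else 0)"

definition wedge_list :: "'r::comm_ring_1 ext list \<Rightarrow> 'r ext" where
  "wedge_list xs = foldr wedge xs ext_one"

definition eS :: "nat list \<Rightarrow> 'r::comm_ring_1 ext" where
  "eS S = wedge_list (map gen S)"

text \<open>The R-linear map \<partial> : E^p \<rightarrow> E^(p-1) for the exterior algebra on e_1..e_n:
coefficient of e_J in \<partial> x.  It satisfies \<partial> e_I = sum_k (-1)^(k-1) e_(I - {i_k}).\<close>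
definition bd :: "nat \<Rightarrow> 'r::comm_ring_1 ext \<Rightarrow> 'r ext" where
  "bd n x = (\<lambda>J. \<Sum>i\<in>{1..n} - J. (-1) ^ card {j\<in>J. j < i} * x (insert i J))"

definition latin_hypercube :: "nat \<Rightarrow> nat \<Rightarrow> (nat list \<Rightarrow> nat) \<Rightarrow> bool" where
  "latin_hypercube l m k \<longleftrightarrow>
     (\<forall>xs. length xs = l \<and> set xs \<subseteq> {1..m} \<longrightarrow> k xs \<in> {1..m}) \<and>
     (\<forall>xs j. length xs = l \<and> set xs \<subseteq> {1..m} \<and> j < l \<longrightarrow>
        bij_betw (\<lambda>t. k (xs[j := t])) {1..m} {1..m})"

definition calC :: "nat \<Rightarrow> nat \<Rightarrow> (nat list \<Rightarrow> nat) \<Rightarrow> nat list set" where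
  "calC l m k = (\<lambda>is. map (\<lambda>j. j * m + is ! j) [0..<l] @ [l * m + k is])
                  ` {is. length is = l \<and> set is \<subseteq> {1..m}}"

definition avec :: "nat \<Rightarrow> nat \<Rightarrow> 'r::comm_ring_1 ext" where
  "avec m s = (\<Sum>i\<in>{(s - 1) * m + 1..s * m}. gen i)"

end

theory Submission
  imports Defs
begin

text \<open>
  \<open>\<partial>\<close> is contraction with the linear form \<open>e\<^sub>i \<mapsto> 1\<close>, hence an antiderivation: for \<open>x\<close>
  of degree one, \<open>\<partial>(x \<wedge> y) = (\<partial>x) y - x \<wedge> \<partial>y\<close>, where the scalar \<open>\<partial>x\<close> is the sum of
  the coefficients of \<open>x\<close>. Every block sum \<open>a\<^sub>s\<close> has \<open>\<partial>a\<^sub>s = m\<close>, so the boundary of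
  \<open>a\<^sub>1 \<wedge> \<dots> \<wedge> a\<^sub>l\<^sub>+\<^sub>1\<close> is \<open>m\<close> times the alternating sum of the products with one factor
  deleted. Since \<open>a\<^sub>2 \<wedge> a\<^sub>2 = 0\<close>, the first factor may be replaced by \<open>a\<^sub>1 - a\<^sub>2\<close>, which
  \<open>\<partial>\<close> kills; iterating gives the first two identities. For the third, expand each deletion
  term multilinearly: the term omitting block \<open>j\<close> becomes the sum of \<open>e\<^sub>T\<close> over all tuples
  \<open>T\<close> taking one index from every other block, and the Latin property says exactly that
  deleting the \<open>j\<close>-th entry maps \<open>\<C>[K]\<close> bijectively onto these tuples.
\<close>

lemma sum_fun_apply: "(\<Sum>i\<in>A. f i) x = (\<Sum>i\<in>A. f i x)"
  by (induction A rule: infinite_finite_induct) auto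

lemma ext_smult_add: "ext_smult c (x + y) = ext_smult c x + ext_smult c y"
  by (simp add: fun_eq_iff ext_smult_def algebra_simps)

lemma ext_smult_diff: "ext_smult c (x - y) = ext_smult c x - ext_smult c y"
  by (simp add: fun_eq_iff ext_smult_def algebra_simps)

lemma ext_smult_minus_left: "ext_smult (- c) x = - ext_smult c x"
  by (simp add: fun_eq_iff ext_smult_def)

lemma ext_smult_zero_left: "ext_smult 0 x = 0"
  by (simp add: fun_eq_iff ext_smult_def)

lemma ext_smult_one: "ext_smult 1 x = x"
  by (simp add: fun_eq_iff ext_smult_def)

lemma ext_smult_smult: "ext_smult a (ext_smult b x) = ext_smult (a * b) x"
  by (simp add: fun_eq_iff ext_smult_def)

lemma ext_smult_zero: "ext_smult c 0 = 0"
  by (simp add: fun_eq_iff ext_smult_def)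

lemma ext_smult_sum: "ext_smult c (\<Sum>i\<in>A. f i) = (\<Sum>i\<in>A. ext_smult c (f i))"
  by (rule sum_comp_morphism[where h="ext_smult c", OF ext_smult_zero ext_smult_add,
        unfolded o_def, symmetric])

lemma ext_smult_sum_left: "ext_smult (\<Sum>i\<in>A. f i) x = (\<Sum>i\<in>A. ext_smult (f i) x)"
  by (simp add: fun_eq_iff ext_smult_def sum_fun_apply sum_distrib_right)

lemma wedge_zero_left: "wedge 0 y = 0"
  by (simp add: fun_eq_iff wedge_def)

lemma wedge_zero_right: "wedge x 0 = 0"
  by (simp add: fun_eq_iff wedge_def)

lemma wedge_add_left: "wedge (x + y) z = wedge x z + wedge y z"
  by (simp add: fun_eq_iff wedge_def algebra_simps sum.distrib)

lemma wedge_add_right: "wedge x (y + z) = wedge x y + wedge x z"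
  by (simp add: fun_eq_iff wedge_def algebra_simps sum.distrib)

lemma wedge_diff_left: "wedge (x - y) z = wedge x z - wedge y z"
  by (simp add: fun_eq_iff wedge_def algebra_simps sum_subtractf)

lemma wedge_smult_left: "wedge (ext_smult c x) y = ext_smult c (wedge x y)"
  by (simp add: fun_eq_iff wedge_def ext_smult_def sum_distrib_left algebra_simps)

lemma wedge_smult_right: "wedge x (ext_smult c y) = ext_smult c (wedge x y)"
  by (simp add: fun_eq_iff wedge_def ext_smult_def sum_distrib_left algebra_simps)

lemma wedge_sum_left: "wedge (\<Sum>i\<in>A. f i) y = (\<Sum>i\<in>A. wedge (f i) y)"
  by (rule sum_comp_morphism[where h="\<lambda>x. wedge x y", OF wedge_zero_left wedge_add_left,
        unfolded o_def, symmetric])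

lemma wedge_sum_right: "wedge x (\<Sum>i\<in>A. f i) = (\<Sum>i\<in>A. wedge x (f i))"
  by (rule sum_comp_morphism[where h="wedge x", OF wedge_zero_right wedge_add_right,
        unfolded o_def, symmetric])

lemma bd_zero: "bd n 0 = 0"
  by (simp add: fun_eq_iff bd_def)

lemma bd_add: "bd n (x + y) = bd n x + bd n y"
  by (simp add: fun_eq_iff bd_def algebra_simps sum.distrib)

lemma bd_diff: "bd n (x - y) = bd n x - bd n y"
  by (simp add: fun_eq_iff bd_def algebra_simps sum_subtractf)

lemma bd_smult: "bd n (ext_smult c x) = ext_smult c (bd n x)"
  by (simp add: fun_eq_iff bd_def ext_smult_def sum_distrib_left algebra_simps)

lemma bd_sum: "bd n (\<Sum>i\<in>A. f i) = (\<Sum>i\<in>A. bd n (f i))"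
  by (rule sum_comp_morphism[where h="bd n", OF bd_zero bd_add, unfolded o_def, symmetric])

lemma bd_ext_one: "bd n ext_one = 0"
  by (simp add: fun_eq_iff bd_def ext_one_def)

section \<open>Multiplication by a generator\<close>

text \<open>The sign of moving \<open>e\<^sub>i\<close> past the \<open>e\<^sub>j\<close>, \<open>j \<in> K\<close>, \<open>j < i\<close>.\<close>
definition ins_sign :: "nat \<Rightarrow> nat set \<Rightarrow> 'r::comm_ring_1" where
  "ins_sign i K = (-1) ^ card {j\<in>K. j < i}"

lemma ins_sign_insert:
  assumes "finite K" "j \<notin> K"
  shows "ins_sign i (insert j K) = (if j < i then -1 else 1) * ins_sign i K"
proof (cases "j < i")
  case True
  then have "{x\<in>insert j K. x < i} = insert j {x\<in>K. x < i}" by auto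
  then show ?thesis using True assms by (simp add: ins_sign_def)
next
  case False
  then have "{x\<in>insert j K. x < i} = {x\<in>K. x < i}" by auto
  then show ?thesis using False by (simp add: ins_sign_def)
qed

lemma ins_sign_remove_self: "ins_sign i (K - {i}) = ins_sign i K"
  unfolding ins_sign_def by (rule arg_cong[where f="\<lambda>S. (-1) ^ card S"]) auto

lemma ins_sign_square: "ins_sign i K * ins_sign i K = 1"
  by (simp add: ins_sign_def flip: power_add)

lemma wedge_gen_apply:
  "wedge (gen i) y K = (if finite K \<and> i \<in> K then ins_sign i K * y (K - {i}) else 0)"
proof (cases "finite K \<and> i \<in> K")
  case True
  have "inv_count {i} (K - {i}) = card {j\<in>K. j < i}"
  proof -
    have "{(a, j). a \<in> {i} \<and> j \<in> K - {i} \<and> j < a} = Pair i ` {j\<in>K. j < i}" by auto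
    then show ?thesis by (simp add: inv_count_def card_image inj_on_def)
  qed
  then have "(\<Sum>I\<in>Pow K. (-1) ^ inv_count I (K - I) * (if I = {i} then 1 else 0) * y (K - I))
      = (\<Sum>I\<in>Pow K. if I = {i} then ins_sign i K * y (K - {i}) else 0)"
    by (intro sum.cong) (auto simp: ins_sign_def)
  then show ?thesis using True by (simp add: wedge_def gen_def)
qed (auto simp: wedge_def gen_def intro!: sum.neutral)

lemma wedge_gen_gen_self: "wedge (gen i) (wedge (gen i) y) = 0"
  by (simp add: fun_eq_iff wedge_gen_apply)

lemma wedge_gen_anticommute:
  "wedge (gen i) (wedge (gen j) y) = - wedge (gen j) (wedge (gen i) y)"
proof (cases "i = j")
  case False
  show ?thesis
  proof (rule ext)
    fix K :: "nat set"
    show "wedge (gen i) (wedge (gen j) y) K = (- wedge (gen j) (wedge (gen i) y)) K"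
    proof (cases "finite K \<and> i \<in> K \<and> j \<in> K")
      case True
      define L where "L = K - {i, j}"
      have K: "K = insert i (insert j L)" and L: "finite L" "i \<notin> L" "j \<notin> L"
        using True unfolding L_def by auto
      have "K - {i} = insert j L" "K - {j} = insert i L"
        "insert j L - {j} = L" "insert i L - {i} = L"
        using K L False by auto
      then show ?thesis
        using K L False by (auto simp: wedge_gen_apply ins_sign_insert)
    qed (auto simp: wedge_gen_apply)
  qed
qed (simp add: wedge_gen_gen_self)

text \<open>Coefficient functions may be nonzero on infinite index sets, which index no basis element;
  wedge products vanish there, and \<open>bd_wedge_gen\<close> fails without this.\<close>
definition vanishes_on_infinite :: "'r::comm_ring_1 ext \<Rightarrow> bool" where
  "vanishes_on_infinite x \<longleftrightarrow> (\<forall>K. infinite K \<longrightarrow> x K = 0)"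

lemma vanishes_on_infinite_wedge_list: "vanishes_on_infinite (wedge_list xs)"
  by (cases xs) (auto simp: vanishes_on_infinite_def wedge_list_def wedge_def ext_one_def)

lemma bd_apply: "bd n x J = (\<Sum>t\<in>{1..n} - J. ins_sign t J * x (insert t J))"
  by (simp add: bd_def ins_sign_def)

lemma bd_wedge_gen_apply_mem:
  assumes i: "i \<in> {1..n}" and J: "finite J" "i \<in> J"
  shows "bd n (wedge (gen i) y) J = y J - wedge (gen i) (bd n y) J"
proof -
  define L where "L = J - {i}"
  have J_eq: "J = insert i L" and L: "finite L" "i \<notin> L" using J by (auto simp: L_def)
  have rem: "J - {i} = L" and sgn: "ins_sign i J = ins_sign i L"
    by (simp_all add: L_def ins_sign_remove_self)
  have compl: "{1..n} - L = insert i ({1..n} - J)" using i J by (auto simp: L_def)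
  have "wedge (gen i) (bd n y) J
      = ins_sign i L * (\<Sum>t\<in>insert i ({1..n} - J). ins_sign t L * y (insert t L))"
    unfolding wedge_gen_apply bd_apply rem compl sgn using J by simp
  also have "\<dots> = y J + (\<Sum>t\<in>{1..n} - J. ins_sign i L * ins_sign t L * y (insert t L))"
    using J
    by (simp add: J_eq[symmetric] distrib_left sum_distrib_left mult.assoc[symmetric] ins_sign_square)
  finally have "wedge (gen i) (bd n y) J = \<dots>" .
  moreover have "bd n (wedge (gen i) y) J
      = (\<Sum>t\<in>{1..n} - J. - (ins_sign i L * ins_sign t L * y (insert t L)))"
    unfolding bd_apply
  proof (intro sum.cong refl)
    fix t assume "t \<in> {1..n} - J"
    then have t: "t \<notin> L" "t \<noteq> i" using J_eq by auto
    have "insert t (insert i L) - {i} = insert t L" using t L by auto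
    \<comment> \<open>inserting \<open>t\<close> and \<open>i\<close> into \<open>L\<close> in the two possible orders gives opposite signs\<close>
    then show "ins_sign t J * wedge (gen i) y (insert t J)
        = - (ins_sign i L * ins_sign t L * y (insert t L))"
      using t L by (auto simp: J_eq wedge_gen_apply ins_sign_insert insert_commute)
  qed
  ultimately show ?thesis by (simp add: sum_negf)
qed

lemma bd_wedge_gen:
  assumes i: "i \<in> {1..n}" and y: "vanishes_on_infinite y"
  shows "bd n (wedge (gen i) y) = y - wedge (gen i) (bd n y)"
proof (rule ext)
  fix J :: "nat set"
  consider "infinite J" | "finite J" "i \<notin> J" | "finite J" "i \<in> J" by blast
  then show "bd n (wedge (gen i) y) J = (y - wedge (gen i) (bd n y)) J"
  proof cases
    case 1
    then show ?thesis using y by (simp add: bd_apply wedge_gen_apply vanishes_on_infinite_def)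
  next
    case 2
    have "bd n (wedge (gen i) y) J = (\<Sum>t\<in>{1..n} - J. if t = i then y J else 0)"
      unfolding bd_apply using 2
      by (intro sum.cong)
        (auto simp: wedge_gen_apply ins_sign_insert mult.assoc[symmetric] ins_sign_square)
    then show ?thesis using 2 i by (simp add: wedge_gen_apply)
  next
    case 3
    then show ?thesis using i by (simp add: bd_wedge_gen_apply_mem)
  qed
qed

section \<open>Elements of degree one\<close>

definition degree_one :: "nat \<Rightarrow> 'r::comm_ring_1 ext \<Rightarrow> bool" where
  "degree_one n x \<longleftrightarrow> (\<forall>K. x K \<noteq> 0 \<longrightarrow> (\<exists>i\<in>{1..n}. K = {i}))"

lemma degree_one_expansion:
  assumes "degree_one n x"
  shows "x = (\<Sum>i\<in>{1..n}. ext_smult (x {i}) (gen i))"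
proof (rule ext)
  fix K
  have "(\<Sum>i\<in>{1..n}. ext_smult (x {i}) (gen i)) K
      = (\<Sum>i\<in>{1..n}. if K = {i} then x K else 0)"
    unfolding sum_fun_apply by (intro sum.cong) (auto simp: ext_smult_def gen_def)
  also have "\<dots> = x K"
    using assms unfolding degree_one_def by (cases "\<exists>i\<in>{1..n}. K = {i}") auto
  finally show "x K = (\<Sum>i\<in>{1..n}. ext_smult (x {i}) (gen i)) K" ..
qed

lemma wedge_degree_one:
  assumes "degree_one n x"
  shows "wedge x y = (\<Sum>i\<in>{1..n}. ext_smult (x {i}) (wedge (gen i) y))"
  by (subst degree_one_expansion[OF assms]) (simp add: wedge_sum_left wedge_smult_left)

lemma bd_apply_empty: "bd n x {} = (\<Sum>i\<in>{1..n}. x {i})"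
  by (simp add: bd_def)

lemma bd_wedge_degree_one:
  assumes "degree_one n x" and "vanishes_on_infinite y"
  shows "bd n (wedge x y) = ext_smult (bd n x {}) y - wedge x (bd n y)"
  using assms
  by (simp add: wedge_degree_one bd_sum bd_smult bd_wedge_gen ext_smult_diff sum_subtractf
      bd_apply_empty ext_smult_sum_left)

lemma sum_sum_antisymmetric:
  fixes g :: "'a \<Rightarrow> 'a \<Rightarrow> 'b::ab_group_add"
  assumes "finite A" and "\<And>i. g i i = 0" and "\<And>i j. g i j = - g j i"
  shows "(\<Sum>i\<in>A. \<Sum>j\<in>A. g i j) = 0"
  using assms(1)
proof (induction A rule: finite_induct)
  case (insert x A)
  have "(\<Sum>i\<in>insert x A. \<Sum>j\<in>insert x A. g i j)
      = (\<Sum>j\<in>A. g x j + g j x) + (\<Sum>i\<in>A. \<Sum>j\<in>A. g i j)"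
    using insert.hyps assms(2) by (simp add: sum.distrib add_ac)
  also have "\<dots> = 0"
    using insert.IH by (simp add: assms(3)[of _ x])
  finally show ?case .
qed simp

lemma wedge_degree_one_self:
  assumes "degree_one n x"
  shows "wedge x (wedge x y) = 0"
proof -
  have "wedge x (wedge x y)
      = (\<Sum>j\<in>{1..n}. \<Sum>i\<in>{1..n}.
          ext_smult (x {j} * x {i}) (wedge (gen i) (wedge (gen j) y)))"
    by (simp add: wedge_degree_one[OF assms] wedge_sum_right wedge_smult_right ext_smult_sum
        ext_smult_smult)
  also have "\<dots> = 0"
  proof (rule sum_sum_antisymmetric)
    fix i j
    show "ext_smult (x {j} * x {i}) (wedge (gen i) (wedge (gen j) y))
        = - ext_smult (x {i} * x {j}) (wedge (gen j) (wedge (gen i) y))"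
      by (subst wedge_gen_anticommute) (simp add: fun_eq_iff ext_smult_def mult.commute)
  qed (simp_all add: wedge_gen_gen_self ext_smult_zero)
  finally show ?thesis .
qed

lemma degree_one_diff: "degree_one n x \<Longrightarrow> degree_one n y \<Longrightarrow> degree_one n (x - y)"
  unfolding degree_one_def by (metis diff_self minus_apply)

lemma degree_one_gen: "i \<in> {1..n} \<Longrightarrow> degree_one n (gen i)"
  by (auto simp: degree_one_def gen_def)

lemma bd_gen_apply_empty: "i \<in> {1..n} \<Longrightarrow> bd n (gen i) {} = 1"
  by (simp add: bd_apply_empty gen_def)

lemma degree_one_sum_gen:
  assumes "A \<subseteq> {1..n}"
  shows "degree_one n (\<Sum>i\<in>A. gen i)"
  unfolding degree_one_def
proof (intro allI impI)
  fix K assume "(\<Sum>i\<in>A. gen i) K \<noteq> (0 :: 'a)"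
  then obtain i where "i \<in> A" "gen i K \<noteq> (0 :: 'a)"
    unfolding sum_fun_apply by (meson sum.neutral)
  then show "\<exists>i\<in>{1..n}. K = {i}" using assms by (auto simp: gen_def split: if_splits)
qed

lemma bd_sum_gen_apply_empty:
  assumes "A \<subseteq> {1..n}"
  shows "bd n (\<Sum>i\<in>A. gen i) {} = of_nat (card A)"
proof -
  have "bd n (gen i) {} = 1" if "i \<in> A" for i
    using that assms bd_gen_apply_empty[of i n] by auto
  then have "bd n (\<Sum>i\<in>A. gen i) {} = (\<Sum>i\<in>A. 1)"
    unfolding bd_sum sum_fun_apply by (rule sum.cong[OF refl])
  then show ?thesis by simp
qed

section \<open>The boundary of a product\<close>

lemma wedge_list_Nil: "wedge_list [] = ext_one"
  by (simp add: wedge_list_def)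

lemma wedge_list_Cons: "wedge_list (x # xs) = wedge x (wedge_list xs)"
  by (simp add: wedge_list_def)

definition del_nth :: "nat \<Rightarrow> 'a list \<Rightarrow> 'a list" where
  "del_nth j xs = take j xs @ drop (Suc j) xs"

definition alt_deletions :: "'r::comm_ring_1 ext list \<Rightarrow> 'r ext" where
  "alt_deletions xs = (\<Sum>j<length xs. ext_smult ((-1) ^ j) (wedge_list (del_nth j xs)))"

lemma alt_deletions_Cons: "alt_deletions (x # xs) = wedge_list xs - wedge x (alt_deletions xs)"
proof -
  have "alt_deletions (x # xs) = ext_smult 1 (wedge_list xs)
      + (\<Sum>j<length xs. ext_smult ((-1) ^ Suc j) (wedge_list (x # del_nth j xs)))"
    unfolding alt_deletions_def
    by (simp only: length_Cons sum.lessThan_Suc_shift) (simp add: del_nth_def)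
  then show ?thesis
    by (simp add: alt_deletions_def wedge_sum_right wedge_smult_right wedge_list_Cons ext_smult_one
        ext_smult_minus_left sum_negf)
qed

lemma bd_wedge_list:
  assumes "\<forall>x\<in>set xs. degree_one n x \<and> bd n x {} = c"
  shows "bd n (wedge_list xs) = ext_smult c (alt_deletions xs)"
  using assms
proof (induction xs)
  case Nil
  then show ?case by (simp add: wedge_list_Nil bd_ext_one alt_deletions_def ext_smult_def)
next
  case (Cons x xs)
  then have x: "degree_one n x" "bd n x {} = c"
    and xs: "\<forall>x\<in>set xs. degree_one n x \<and> bd n x {} = c"
    by simp_all
  have "bd n (wedge_list (x # xs)) = ext_smult c (wedge_list xs) - wedge x (bd n (wedge_list xs))"
    unfolding wedge_list_Cons bd_wedge_degree_one[OF x(1) vanishes_on_infinite_wedge_list] x(2) ..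
  also have "\<dots> = ext_smult c (alt_deletions (x # xs))"
    unfolding Cons.IH[OF xs] alt_deletions_Cons ext_smult_diff wedge_smult_right ..
  finally show ?case .
qed

lemma bd_wedge_list_Cons_Cons:
  assumes "degree_one n x" "degree_one n y" "bd n x {} = bd n y {}"
  shows "bd n (wedge_list (x # y # ys)) = - wedge (x - y) (bd n (wedge_list (y # ys)))"
proof -
  have "wedge_list (x # y # ys) = wedge (x - y) (wedge_list (y # ys))"
    using wedge_degree_one_self[OF assms(2)] by (simp add: wedge_list_Cons wedge_diff_left)
  then show ?thesis
    using assms by (simp add: bd_wedge_degree_one degree_one_diff vanishes_on_infinite_wedge_list
        bd_diff ext_smult_zero_left)
qed

lemma bd_wedge_list_upt:
  assumes "\<forall>s\<in>{i..i + p}. degree_one n (a s) \<and> bd n (a s) {} = c"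
  shows "bd n (wedge_list (map a [i..<i + p + 1]))
    = ext_smult ((-1) ^ p * c) (wedge_list (map (\<lambda>s. a s - a (s + 1)) [i..<i + p]))"
  using assms
proof (induction p arbitrary: i)
  case 0
  then show ?case
    using bd_wedge_list[of "[a i]" n c] by (simp add: alt_deletions_def del_nth_def ext_smult_one)
next
  case (Suc p)
  let ?d = "\<lambda>s. a s - a (s + 1)"
  have split: "map a [i..<i + Suc p + 1] = a i # map a [i + 1..<i + 1 + p + 1]"
    "map a [i + 1..<i + 1 + p + 1] = a (i + 1) # map a [i + 2..<i + 1 + p + 1]"
    "map ?d [i..<i + Suc p] = ?d i # map ?d [i + 1..<i + 1 + p]"
    by (simp_all add: upt_conv_Cons del: upt_Suc)
  have ai: "degree_one n (a i)" "degree_one n (a (i + 1))" "bd n (a i) {} = bd n (a (i + 1)) {}"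
    using Suc.prems by auto
  have "bd n (wedge_list (map a [i..<i + Suc p + 1]))
      = - wedge (?d i) (bd n (wedge_list (map a [i + 1..<i + 1 + p + 1])))"
    unfolding split(1) unfolding split(2) by (rule bd_wedge_list_Cons_Cons[OF ai])
  also have "\<dots> = ext_smult ((-1) ^ Suc p * c) (wedge_list (map ?d [i..<i + Suc p]))"
    using Suc.prems unfolding split(3)
    by (subst Suc.IH)
      (auto simp: wedge_smult_right wedge_list_Cons ext_smult_minus_left simp del: upt_Suc)
  finally show ?case .
qed

lemma bd_eS:
  assumes "set S \<subseteq> {1..n}"
  shows "bd n (eS S) = (alt_deletions (map gen S) :: 'r::comm_ring_1 ext)"
proof -
  have "degree_one n (gen i) \<and> bd n (gen i) {} = (1 :: 'r)" if "i \<in> set S" for i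
    using that assms degree_one_gen[of i n] bd_gen_apply_empty[of i n] by auto
  then have "\<forall>x\<in>set (map gen S :: 'r ext list). degree_one n x \<and> bd n x {} = 1" by auto
  then have "bd n (wedge_list (map gen S)) = ext_smult 1 (alt_deletions (map gen S) :: 'r ext)"
    by (rule bd_wedge_list)
  then show ?thesis by (simp add: eS_def ext_smult_one)
qed

section \<open>Latin hypercubes\<close>

lemma length_del_nth: "j < length xs \<Longrightarrow> length (del_nth j xs) = length xs - 1"
  by (simp add: del_nth_def)

lemma set_del_nth: "set (del_nth j xs) \<subseteq> set xs"
  by (auto simp: del_nth_def dest: in_set_takeD in_set_dropD)

lemma del_nth_map: "del_nth j (map f xs) = map f (del_nth j xs)"
  by (simp add: del_nth_def take_map drop_map)

lemma del_nth_zip: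
  "length xs = length ys \<Longrightarrow> del_nth j (zip xs ys) = zip (del_nth j xs) (del_nth j ys)"
  by (simp add: del_nth_def take_zip drop_zip)

lemma del_nth_append: "j < length xs \<Longrightarrow> del_nth j (xs @ ys) = del_nth j xs @ ys"
  by (simp add: del_nth_def)

lemma del_nth_append_length: "del_nth (length xs) (xs @ y # ys) = xs @ ys"
  by (simp add: del_nth_def)

lemma del_nth_list_update: "del_nth j (xs[j := x]) = del_nth j xs"
  by (simp add: del_nth_def)

lemma del_nth_take_Cons_drop: "j \<le> length xs \<Longrightarrow> del_nth j (take j xs @ x # drop j xs) = xs"
  by (simp add: del_nth_def)

lemma eq_list_update_if_del_nth_eq:
  assumes "length xs = length ys" "j < length xs" "del_nth j xs = del_nth j ys"
  shows "ys = xs[j := ys ! j]"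
proof -
  have "take j xs = take j ys" "drop (Suc j) xs = drop (Suc j) ys"
    using assms by (simp_all add: del_nth_def append_eq_append_conv)
  then show ?thesis
    using assms(1,2) by (metis id_take_nth_drop upd_conv_take_nth_drop)
qed

lemma latin_hypercube_del_nth_bij:
  assumes latin: "latin_hypercube l m k" and "j \<le> l"
  shows "bij_betw (\<lambda>xs. del_nth j (xs @ [k xs]))
    {xs. set xs \<subseteq> {1..m} \<and> length xs = l} {xs. set xs \<subseteq> {1..m} \<and> length xs = l}"
    (is "bij_betw ?f ?T ?T")
proof (cases "j = l")
  case True
  have "?f xs = id xs" if "xs \<in> ?T" for xs
    using that True del_nth_append_length[of xs "k xs" "[]"] by simp
  then show ?thesis using bij_betw_cong[of ?T ?f id ?T] bij_betw_id by blast
next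
  case False
  with \<open>j \<le> l\<close> have j: "j < l" by simp
  have k_in: "k xs \<in> {1..m}" and k_bij: "bij_betw (\<lambda>t. k (xs[j := t])) {1..m} {1..m}"
    if "xs \<in> ?T" for xs
    using latin j that unfolding latin_hypercube_def by auto
  have f_eq: "?f xs = del_nth j xs @ [k xs]" if "xs \<in> ?T" for xs
    using that j by (simp add: del_nth_append)
  have "inj_on ?f ?T"
  proof (rule inj_onI)
    fix xs ys assume xs: "xs \<in> ?T" and ys: "ys \<in> ?T" and "?f xs = ?f ys"
    then have del: "del_nth j xs = del_nth j ys" and k: "k xs = k ys" by (simp_all add: f_eq)
    have ys_upd: "ys = xs[j := ys ! j]"
      using xs ys j del by (intro eq_list_update_if_del_nth_eq) auto
    have "xs ! j \<in> set xs" "ys ! j \<in> set ys" using xs ys j by simp_all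
    then have "xs ! j \<in> {1..m}" "ys ! j \<in> {1..m}" using xs ys by blast+
    moreover have "k (xs[j := xs ! j]) = k (xs[j := ys ! j])" using k ys_upd by simp
    ultimately have "xs ! j = ys ! j"
      using inj_onD[OF bij_betw_imp_inj_on[OF k_bij[OF xs]]] by blast
    then show "xs = ys" using ys_upd by (metis list_update_id)
  qed
  moreover have "?f ` ?T \<subseteq> ?T"
  proof (rule image_subsetI)
    fix xs assume xs: "xs \<in> ?T"
    then have "set (del_nth j xs) \<subseteq> {1..m}" using set_del_nth[of j xs] by auto
    then show "?f xs \<in> ?T" using xs j k_in[OF xs] by (simp add: f_eq length_del_nth)
  qed
  moreover have "?T \<subseteq> ?f ` ?T"
  proof
    fix u assume u: "u \<in> ?T"
    have "u \<noteq> []" using u j by auto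
    then obtain v w where uvw: "u = v @ [w]" by (metis rev_exhaust)
    then have v: "length v = l - 1" using u by auto
    define base where "base = take j v @ w # drop j v"
    have w: "w \<in> {1..m}" and base: "base \<in> ?T"
      using u j v by (auto simp: uvw base_def dest: in_set_takeD in_set_dropD)
    then have "w \<in> (\<lambda>t. k (base[j := t])) ` {1..m}"
      using k_bij[OF base] by (simp add: bij_betw_def)
    then obtain t where t: "t \<in> {1..m}" "k (base[j := t]) = w" by blast
    have upd: "base[j := t] \<in> ?T"
      using base t(1) set_update_subset_insert[of base j t] by auto
    have "?f (base[j := t]) = del_nth j base @ [w]"
      using f_eq[OF upd] t(2) by (simp add: del_nth_list_update)
    also have "\<dots> = u" using j v by (simp add: base_def del_nth_take_Cons_drop uvw)
    finally show "u \<in> ?f ` ?T" using upd by (rule image_eqI[OF sym])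
  qed
  ultimately show ?thesis by (simp add: bij_betw_def)
qed

lemma wedge_list_map_sum:
  assumes "finite A"
  shows "wedge_list (map (\<lambda>s. \<Sum>i\<in>A. f s i) xs)
    = (\<Sum>u\<in>{u. set u \<subseteq> A \<and> length u = length xs}. wedge_list (map2 f xs u))"
proof (induction xs)
  case Nil
  have "{u. set u \<subseteq> A \<and> length u = 0} = {[]}" by auto
  then show ?case by simp
next
  case (Cons x xs)
  let ?U = "{u. set u \<subseteq> A \<and> length u = length xs}"
  have "wedge_list (map (\<lambda>s. \<Sum>i\<in>A. f s i) (x # xs))
      = (\<Sum>(u, i)\<in>?U \<times> A. wedge_list (map2 f (x # xs) (i # u)))"
    using Cons.IH
    by (simp add: wedge_list_Cons wedge_sum_left wedge_sum_right sum.cartesian_product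
        sum.swap[of _ A])
  also have "\<dots>
      = (\<Sum>u\<in>{u. set u \<subseteq> A \<and> length u = length (x # xs)}. wedge_list (map2 f (x # xs) u))"
    unfolding length_Cons lists_length_Suc_eq
    by (subst sum.reindex[OF inj_split_Cons]) (simp add: case_prod_beta)
  finally show ?case .
qed

lemma sum_alt_deletions_latin:
  assumes latin: "latin_hypercube l m k"
  shows "(\<Sum>xs\<in>{xs. set xs \<subseteq> {1..m} \<and> length xs = l}.
            alt_deletions (map2 f [0..<Suc l] (xs @ [k xs])))
    = alt_deletions (map (\<lambda>r. \<Sum>i\<in>{1..m}. f r i) [0..<Suc l])"
proof -
  let ?T = "{xs. set xs \<subseteq> {1..m} \<and> length xs = l}"
  let ?w = "\<lambda>rs u. wedge_list (map2 f rs u)"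
  have "alt_deletions (map2 f [0..<Suc l] (xs @ [k xs]))
      = (\<Sum>j<Suc l. ext_smult ((-1) ^ j)
          (?w (del_nth j [0..<Suc l]) (del_nth j (xs @ [k xs]))))"
    if "xs \<in> ?T" for xs
    using that by (simp add: alt_deletions_def del_nth_map del_nth_zip del: upt_Suc)
  then have "(\<Sum>xs\<in>?T. alt_deletions (map2 f [0..<Suc l] (xs @ [k xs])))
      = (\<Sum>xs\<in>?T. \<Sum>j<Suc l. ext_smult ((-1) ^ j)
           (?w (del_nth j [0..<Suc l]) (del_nth j (xs @ [k xs]))))"
    by (rule sum.cong[OF refl])
  also have "\<dots> = (\<Sum>j<Suc l. ext_smult ((-1) ^ j)
           (\<Sum>xs\<in>?T. ?w (del_nth j [0..<Suc l]) (del_nth j (xs @ [k xs]))))"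
    unfolding ext_smult_sum by (rule sum.swap)
  also have "\<dots> = (\<Sum>j<Suc l. ext_smult ((-1) ^ j) (\<Sum>u\<in>?T. ?w (del_nth j [0..<Suc l]) u))"
  proof (rule sum.cong[OF refl])
    fix j assume "j \<in> {..<Suc l}"
    then have bij: "bij_betw (\<lambda>xs. del_nth j (xs @ [k xs])) ?T ?T"
      by (intro latin_hypercube_del_nth_bij[OF latin]) simp
    show "ext_smult ((-1) ^ j)
          (\<Sum>xs\<in>?T. ?w (del_nth j [0..<Suc l]) (del_nth j (xs @ [k xs])))
        = ext_smult ((-1) ^ j) (\<Sum>u\<in>?T. ?w (del_nth j [0..<Suc l]) u)"
      using sum.reindex_bij_betw[OF bij, of "?w (del_nth j [0..<Suc l])"] by simp
  qed
  also have "\<dots> = alt_deletions (map (\<lambda>r. \<Sum>i\<in>{1..m}. f r i) [0..<Suc l])"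
    by (simp add: alt_deletions_def wedge_list_map_sum del_nth_map length_del_nth del: upt_Suc)
  finally show ?thesis .
qed

lemma
  assumes "1 \<le> s" "s * m \<le> n"
  shows degree_one_avec: "degree_one n (avec m s)"
    and bd_avec_apply_empty: "bd n (avec m s) {} = of_nat m"
proof -
  have "{(s - 1) * m + 1..s * m} \<subseteq> {1..n}" using assms by auto
  moreover have "card {(s - 1) * m + 1..s * m} = m" using assms(1) by (cases s) auto
  ultimately show "degree_one n (avec m s)" "bd n (avec m s) {} = of_nat m"
    unfolding avec_def by (simp_all add: degree_one_sum_gen bd_sum_gen_apply_empty)
qed

lemma avec_Suc: "avec m (Suc r) = (\<Sum>i\<in>{1..m}. gen (r * m + i))"
  unfolding avec_def using sum.shift_bounds_cl_nat_ivl[of gen 1 "r * m" m]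
  by (simp add: add.commute)

lemma calC_eq_image:
  "calC l m k = (\<lambda>xs. map2 (\<lambda>r i. r * m + i) [0..<Suc l] (xs @ [k xs]))
    ` {xs. set xs \<subseteq> {1..m} \<and> length xs = l}"
proof -
  have "map (\<lambda>j. j * m + xs ! j) [0..<l] = map2 (\<lambda>r i. r * m + i) [0..<l] xs"
    if "length xs = l" for xs
    using that by (intro nth_equalityI) simp_all
  then show ?thesis unfolding calC_def by (intro image_cong) auto
qed

lemma set_map2_block_offsets:
  assumes "set xs \<subseteq> {1..m}"
  shows "set (map2 (\<lambda>r i. r * m + i) [0..<p] xs) \<subseteq> {1..p * m}"
proof
  fix x assume "x \<in> set (map2 (\<lambda>r i. r * m + i) [0..<p] xs)"
  then obtain r i where ri: "(r, i) \<in> set (zip [0..<p] xs)" "x = r * m + i" by auto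
  then have "Suc r \<le> p" "i \<in> {1..m}"
    using assms set_zip_leftD[OF ri(1)] set_zip_rightD[OF ri(1)] by auto
  then have "r * m + m \<le> p * m" "i \<in> {1..m}" using mult_le_mono1[of "Suc r" p m] by auto
  then show "x \<in> {1..p * m}" using ri(2) by auto
qed

lemma sum_calC_bd_eS:
  assumes latin: "latin_hypercube l m k" and n: "(l + 1) * m \<le> n"
  shows "(\<Sum>S\<in>calC l m k. bd n (eS S))
    = (alt_deletions (map (avec m) [1..<l + 2]) :: 'r::comm_ring_1 ext)"
proof -
  let ?T = "{xs. set xs \<subseteq> {1..m} \<and> length xs = l}"
  let ?S = "\<lambda>xs. map2 (\<lambda>r i. r * m + i) [0..<Suc l] (xs @ [k xs])"
  have nth_S: "?S xs ! q = q * m + (xs @ [k xs]) ! q" if "xs \<in> ?T" "q < Suc l" for xs q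
    using that by (simp del: upt_Suc)
  have inj: "inj_on ?S ?T"
  proof (rule inj_onI)
    fix xs ys assume xs: "xs \<in> ?T" and ys: "ys \<in> ?T" and "?S xs = ?S ys"
    then have "xs ! q = ys ! q" if "q < l" for q
      using nth_S[OF xs, of q] nth_S[OF ys, of q] that xs ys by (simp add: nth_append)
    then show "xs = ys" using xs ys by (intro nth_equalityI) auto
  qed
  have "(\<Sum>S\<in>calC l m k. bd n (eS S)) = (\<Sum>xs\<in>?T. bd n (eS (?S xs)) :: 'r ext)"
    unfolding calC_eq_image by (simp only: sum.reindex[OF inj] o_def)
  also have "\<dots> = (\<Sum>xs\<in>?T.
      alt_deletions (map2 (\<lambda>r i. gen (r * m + i)) [0..<Suc l] (xs @ [k xs])))"
  proof (rule sum.cong[OF refl])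
    fix xs assume xs: "xs \<in> ?T"
    then have "set (xs @ [k xs]) \<subseteq> {1..m}" using latin unfolding latin_hypercube_def by auto
    then have "set (?S xs) \<subseteq> {1..n}"
      using set_map2_block_offsets[of "xs @ [k xs]" m "Suc l"] n by auto
    then show "bd n (eS (?S xs))
        = alt_deletions (map2 (\<lambda>r i. gen (r * m + i)) [0..<Suc l] (xs @ [k xs]))"
      by (simp add: bd_eS case_prod_unfold o_def del: upt_Suc)
  qed
  also have "\<dots> = alt_deletions (map (\<lambda>r. \<Sum>i\<in>{1..m}. gen (r * m + i)) [0..<Suc l])"
    by (rule sum_alt_deletions_latin[OF latin])
  also have "\<dots> = alt_deletions (map (avec m) [1..<l + 2])"
    by (simp add: avec_Suc o_def map_Suc_upt[symmetric] del: upt_Suc)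
  finally show ?thesis .
qed

theorem lemma2p3:
  fixes l m n :: nat and k :: "nat list \<Rightarrow> nat"
  assumes "l \<ge> 1" and "m \<ge> 1" and "n = (l + 1) * m"
    and "latin_hypercube l m k"
  defines "a \<equiv> (avec m :: nat \<Rightarrow> 'r::comm_ring_1 ext)"
  shows "bd n (wedge_list (map a [1..<l + 2]))
           = - wedge (a 1 - a 2) (bd n (wedge_list (map a [2..<l + 2])))
       \<and> - wedge (a 1 - a 2) (bd n (wedge_list (map a [2..<l + 2])))
           = ext_smult ((-1) ^ l * of_nat m)
               (wedge_list (map (\<lambda>s. a s - a (s + 1)) [1..<l + 1]))
       \<and> ext_smult ((-1) ^ l * of_nat m)
               (wedge_list (map (\<lambda>s. a s - a (s + 1)) [1..<l + 1]))
           = ext_smult (of_nat m) (\<Sum>S\<in>calC l m k. bd n (eS S))"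
proof -
  have blocks: "\<forall>s\<in>{1..1 + l}. degree_one n (a s) \<and> bd n (a s) {} = of_nat m"
    using assms(3) mult_le_mono1[of _ "l + 1" m]
    by (auto simp: a_def degree_one_avec bd_avec_apply_empty)
  have upt: "[1..<l + 2] = 1 # 2 # [3..<l + 2]" "[2..<l + 2] = 2 # [3..<l + 2]"
    using assms(1) by (simp_all add: upt_conv_Cons numeral_3_eq_3 del: upt_Suc)
  have "bd n (wedge_list (map a [1..<l + 2]))
      = - wedge (a 1 - a 2) (bd n (wedge_list (map a [2..<l + 2])))"
    using blocks assms(1) unfolding upt list.map by (intro bd_wedge_list_Cons_Cons) auto
  moreover have "bd n (wedge_list (map a [1..<l + 2]))
      = ext_smult ((-1) ^ l * of_nat m) (wedge_list (map (\<lambda>s. a s - a (s + 1)) [1..<l + 1]))"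
    using bd_wedge_list_upt[OF blocks] by (simp add: add.commute)
  moreover have "bd n (wedge_list (map a [1..<l + 2]))
      = ext_smult (of_nat m) (\<Sum>S\<in>calC l m k. bd n (eS S))"
  proof -
    have "(\<Sum>S\<in>calC l m k. bd n (eS S)) = alt_deletions (map a [1..<l + 2])"
      unfolding a_def using assms(3) by (intro sum_calC_bd_eS[OF assms(4)]) simp
    then show ?thesis using blocks by (simp add: bd_wedge_list del: upt_Suc)
  qed
  ultimately show ?thesis by simp
qed

end
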